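(* Let $\mathcal A_{0-2}$ be the finite automaton with final state output having states $a_0,a_1,a_2$, input alphabet $X_3=\{0,1,2\}$, initial state $a_1$, transitions $a_1\xrightarrow{0}a_0$, $a_1\xrightarrow{1}a_1$, $a_1\xrightarrow{2}a_2$, and $a_0\xrightarrow{x}a_0$, $a_2\xrightarrow{x}a_2$ for all $x\in X_3$, and output $1$ at $a_0$, $1$ at $a_1$, $-1$ at $a_2$. Then $w_\alpha$ is a ternary automatic sequence produced by $\mathcal A_{0-2}$: for every integer $i\ge0$ and every word $u_0u_1\dots u_m$ over $X_3$ with $i=\sum_{j=0}^m u_j3^j$, the output of the state reached from $a_1$ after reading $u_0,u_1,\dots,u_m$ in this order is the $i$-th term (indexing from $0$) of $w_\alpha$.
   Context: $w_\alpha=\lim_{n\to\infty}\phi^n(1)$, where $\phi$ is the monoid endomorphism of $\{1,-1\}^*$ determined by $\phi(1)=1\,1\,(-1)$ and $\phi(-1)=1\,(-1)\,(-1)$. Input digits are read least significant first. *)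

theory Defs
  imports Main
begin

text \<open>The substitution phi on words over {1,-1}: phi(1) = 1 1 (-1), phi(-1) = 1 (-1) (-1).
  Letters other than 1,-1 never occur; we map them to the empty word.\<close>
fun phi_letter :: "int \<Rightarrow> int list" where
  "phi_letter x = (if x = 1 then [1, 1, -1] else if x = -1 then [1, -1, -1] else [])"

definition phi :: "int list \<Rightarrow> int list" where
  "phi w = concat (map phi_letter w)"

text \<open>w_alpha = lim phi^n(1): its i-th term (0-indexed) is the eventual value of the
  i-th letter of phi^n(1).\<close>
definition w_alpha :: "nat \<Rightarrow> int" where
  "w_alpha i = (THE c. \<forall>\<^sub>F n in sequentially.
       i < length ((phi ^^ n) [1]) \<and> (phi ^^ n) [1] ! i = c)"

datatype state = a0 | a1 | a2

fun delta :: "state \<Rightarrow> nat \<Rightarrow> state" where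
  "delta a1 x = (if x = 0 then a0 else if x = 1 then a1 else a2)"
| "delta a0 x = a0"
| "delta a2 x = a2"

fun out :: "state \<Rightarrow> int" where
  "out a0 = 1"
| "out a1 = 1"
| "out a2 = -1"

text \<open>State reached from q after reading the word, first letter first.\<close>
definition run :: "state \<Rightarrow> nat list \<Rightarrow> state" where
  "run q u = fold (\<lambda>x s. delta s x) u q"

end

theory Submission
  imports Defs
begin

text \<open>Since \<open>\<phi>\<close> is 3-uniform and \<open>\<phi>(x) = 1 x (-1)\<close>, the letter at position
  \<open>3v + d\<close> of \<open>\<phi>\<^sup>n\<^sup>+\<^sup>1(1)\<close> is \<open>1\<close> for \<open>d = 0\<close>, \<open>-1\<close> for \<open>d = 2\<close>, and the letter at
  position \<open>v\<close> of \<open>\<phi>\<^sup>n(1)\<close> for \<open>d = 1\<close>. Hence \<open>w\<^sub>\<alpha>(i)\<close> is decided by the least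
  significant ternary digit of \<open>i\<close> different from \<open>1\<close>, which is precisely what the
  automaton reads: it stays in \<open>a\<^sub>1\<close> on digits \<open>1\<close> and is trapped in \<open>a\<^sub>0\<close> or \<open>a\<^sub>2\<close>
  by the first other digit.\<close>

fun alpha_term :: "nat \<Rightarrow> int" where
  "alpha_term i =
     (if i mod 3 = 0 then 1 else if i mod 3 = 2 then -1 else alpha_term (i div 3))"

declare alpha_term.simps [simp del]

lemma alpha_term_0: "alpha_term 0 = 1"
  by (simp add: alpha_term.simps)

lemma alpha_term_digit:
  assumes "d < 3"
  shows "alpha_term (d + 3 * v) = [1, alpha_term v, -1] ! d"
proof -
  have "(d + 3 * v) mod 3 = d" and "(d + 3 * v) div 3 = v"
    using assms by simp_all
  moreover consider "d = 0" | "d = 1" | "d = 2"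
    using assms by linarith
  ultimately show ?thesis
    by (subst alpha_term.simps) (cases, simp_all)
qed

lemma alpha_term_in_signs: "alpha_term i \<in> {1, -1}"
  by (induction i rule: alpha_term.induct) (subst alpha_term.simps, auto)

lemma nth_concat_map_uniform:
  assumes "\<forall>x\<in>set w. length (f x) = k" and "i < k * length w"
  shows "concat (map f w) ! i = f (w ! (i div k)) ! (i mod k)"
  using assms
proof (induction w arbitrary: i)
  case Nil then show ?case by simp
next
  case (Cons x w)
  show ?case
  proof (cases "i < k")
    case True
    then show ?thesis using Cons.prems by (simp add: nth_append)
  next
    case False
    then have "0 < k" and "k \<le> i"
      using Cons.prems by auto
    from False have "concat (map f (x # w)) ! i = concat (map f w) ! (i - k)"
      using Cons.prems by (simp add: nth_append)
    also have "\<dots> = f (w ! ((i - k) div k)) ! ((i - k) mod k)"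
      using Cons False by simp
    also have "\<dots> = f ((x # w) ! (i div k)) ! (i mod k)"
      using \<open>0 < k\<close> \<open>k \<le> i\<close> by (simp add: le_div_geq le_mod_geq)
    finally show ?thesis .
  qed
qed

lemma set_phi: "set (phi w) \<subseteq> {1, -1}"
  unfolding phi_def by auto

lemma length_phi: "set w \<subseteq> {1, -1} \<Longrightarrow> length (phi w) = 3 * length w"
  by (induction w) (auto simp: phi_def)

lemma nth_phi:
  "set w \<subseteq> {1, -1} \<Longrightarrow> i < 3 * length w \<Longrightarrow>
     phi w ! i = phi_letter (w ! (i div 3)) ! (i mod 3)"
  unfolding phi_def by (rule nth_concat_map_uniform) auto

lemma set_phi_iter: "set ((phi ^^ n) [1]) \<subseteq> {1, -1}"
  by (cases n) (auto simp: set_phi)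

lemma length_phi_iter: "length ((phi ^^ n) [1]) = 3 ^ n"
  by (induction n) (auto simp: length_phi set_phi_iter)

lemma nth_phi_iter: "i < 3 ^ n \<Longrightarrow> (phi ^^ n) [1] ! i = alpha_term i"
proof (induction n arbitrary: i)
  case 0
  then show ?case by (simp add: alpha_term_0)
next
  case (Suc n)
  define v d where "v = i div 3" and "d = i mod 3"
  have i: "i = d + 3 * v" and "d < 3"
    unfolding v_def d_def by simp_all
  have "(phi ^^ Suc n) [1] ! i = phi_letter (alpha_term v) ! d"
    using Suc nth_phi[OF set_phi_iter, of i n]
    by (simp add: v_def d_def length_phi_iter less_mult_imp_div_less)
  also have "\<dots> = [1, alpha_term v, -1] ! d"
    using alpha_term_in_signs[of v] by auto
  also have "\<dots> = alpha_term i"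
    unfolding i using \<open>d < 3\<close> by (rule alpha_term_digit [symmetric])
  finally show ?case .
qed

lemma w_alpha_eqI:
  assumes "\<forall>\<^sub>F n in sequentially. i < length ((phi ^^ n) [1]) \<and> (phi ^^ n) [1] ! i = c"
  shows "w_alpha i = c"
  unfolding w_alpha_def
proof (rule the_equality)
  fix c'
  assume "\<forall>\<^sub>F n in sequentially. i < length ((phi ^^ n) [1]) \<and> (phi ^^ n) [1] ! i = c'"
  with assms have "\<forall>\<^sub>F n in sequentially. c' = c"
    by (rule eventually_elim2) auto
  then show "c' = c" by simp
qed (rule assms)

lemma w_alpha_eq_alpha_term: "w_alpha i = alpha_term i"
proof (rule w_alpha_eqI, rule eventually_sequentiallyI)
  fix n assume "i \<le> n"
  have "i < 3 ^ i"
    by (induction i) auto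
  also have "\<dots> \<le> 3 ^ n"
    using \<open>i \<le> n\<close> by (rule power_increasing) simp
  finally have "i < 3 ^ n" .
  then show "i < length ((phi ^^ n) [1]) \<and> (phi ^^ n) [1] ! i = alpha_term i"
    by (simp add: length_phi_iter nth_phi_iter)
qed

lemma sum_digits_Cons:
  fixes b :: nat
  shows "(\<Sum>j<length (x # xs). (x # xs) ! j * b ^ j) = x + b * (\<Sum>j<length xs. xs ! j * b ^ j)"
  by (simp add: sum.lessThan_Suc_shift sum_distrib_left mult.left_commute del: sum.lessThan_Suc)

lemma run_Cons: "run q (x # xs) = run (delta q x) xs"
  by (simp add: run_def)

lemma run_a0: "run a0 xs = a0"
  by (induction xs) (auto simp: run_def)

lemma run_a2: "run a2 xs = a2"
  by (induction xs) (auto simp: run_def)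

lemma out_run_a1:
  "set u \<subseteq> {0, 1, 2} \<Longrightarrow> out (run a1 u) = alpha_term (\<Sum>j<length u. u ! j * 3 ^ j)"
proof (induction u)
  case Nil
  then show ?case by (simp add: run_def alpha_term_0)
next
  case (Cons x xs)
  then have "x < 3" and IH: "out (run a1 xs) = alpha_term (\<Sum>j<length xs. xs ! j * 3 ^ j)"
    by auto
  have "out (run a1 (x # xs)) = [1, out (run a1 xs), -1] ! x"
  proof -
    consider "x = 0" | "x = 1" | "x = 2"
      using \<open>x < 3\<close> by linarith
    then show ?thesis
      by cases (simp_all add: run_Cons run_a0 run_a2)
  qed
  also have "\<dots> = alpha_term (x + 3 * (\<Sum>j<length xs. xs ! j * 3 ^ j))"
    unfolding IH using \<open>x < 3\<close> by (rule alpha_term_digit [symmetric])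
  also have "\<dots> = alpha_term (\<Sum>j<length (x # xs). (x # xs) ! j * 3 ^ j)"
    by (simp only: sum_digits_Cons)
  finally show ?case .
qed

theorem mainTheorem5:
  fixes u :: "nat list"
  assumes "u \<noteq> []" and "set u \<subseteq> {0, 1, 2}"
  shows "out (run a1 u) = w_alpha (\<Sum>j<length u. u ! j * 3 ^ j)"
  using out_run_a1[OF assms(2)] by (simp add: w_alpha_eq_alpha_term)

end
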